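(* Let $(G,u,v,\alpha,\beta)$ be a Guvab with $\lim_{k\to\infty}W_k=0$. Then $\{W_k\}$ is eventually constant if and only if one of the following holds: (1) $\alpha=\beta=0$ and $N(u)=N(v)$; (2) $\alpha=\beta=\frac{1}{\deg u+1}$, $\{u,v\}\in E(G)$, and in the graph obtained by removing the edge $\{u,v\}$ from $G$, the vertices $u$ and $v$ have the same neighbor set; (3) $\alpha=\beta$ and $u=v$.
   Context: A Guvab is a tuple $(G,u,v,\alpha,\beta)$ where $G$ is a finite, connected, simple graph, $u,v\in V(G)$, and $\alpha,\beta\in[0,1]$ with $\alpha\le\beta$. A random walk on $G$ with starting vertex $w$ and laziness $\gamma$ is the Markov chain $R_0=w$ and, for $i\ge1$, $R_i=R_{i-1}$ with probability $\gamma$ and $R_i=t$ with probability $\frac{1-\gamma}{\deg(R_{i-1})}$ for each neighbor $t$ of $R_{i-1}$. $\mu_k$ is the distribution after $k$ steps of the walk from $u$ with laziness $\alpha$, $\nu_k$ that of the walk from $v$ with laziness $\beta$, and $W_k=W(\mu_k,\nu_k)$ is the Wasserstein ($L^1$ optimal transport) distance with respect to the graph distance. $N(w)$ is the neighbor set of $w$. A sequence $\{S_i\}$ is eventually constant if there is $N$ with $S_k=S_N$ for all $k\ge N$. *)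

theory Defs
  imports "HOL-Analysis.Analysis"
begin

definition edge_rel :: "('a \<Rightarrow> 'a \<Rightarrow> bool) \<Rightarrow> ('a \<times> 'a) set" where
  "edge_rel E = {(a, b). E a b}"

definition simple_graph :: "'a set \<Rightarrow> ('a \<Rightarrow> 'a \<Rightarrow> bool) \<Rightarrow> bool" where
  "simple_graph V E \<longleftrightarrow> finite V \<and> V \<noteq> {} \<and>
     (\<forall>x y. E x y \<longrightarrow> x \<in> V \<and> y \<in> V) \<and>
     (\<forall>x y. E x y \<longrightarrow> E y x) \<and> (\<forall>x. \<not> E x x)"

definition connected_graph :: "'a set \<Rightarrow> ('a \<Rightarrow> 'a \<Rightarrow> bool) \<Rightarrow> bool" where
  "connected_graph V E \<longleftrightarrow> (\<forall>x\<in>V. \<forall>y\<in>V. \<exists>n. (x, y) \<in> edge_rel E ^^ n)"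

definition nbrs :: "'a set \<Rightarrow> ('a \<Rightarrow> 'a \<Rightarrow> bool) \<Rightarrow> 'a \<Rightarrow> 'a set" where
  "nbrs V E w = {t \<in> V. E w t}"

definition deg :: "'a set \<Rightarrow> ('a \<Rightarrow> 'a \<Rightarrow> bool) \<Rightarrow> 'a \<Rightarrow> nat" where
  "deg V E w = card (nbrs V E w)"

definition gdist :: "('a \<Rightarrow> 'a \<Rightarrow> bool) \<Rightarrow> 'a \<Rightarrow> 'a \<Rightarrow> nat" where
  "gdist E x y = (LEAST n. (x, y) \<in> edge_rel E ^^ n)"

text \<open>Distribution after k steps of the lazy random walk started at w with
laziness \<gamma>: point masses on V, evolved by the transition kernel.\<close>
fun walk_dist :: "'a set \<Rightarrow> ('a \<Rightarrow> 'a \<Rightarrow> bool) \<Rightarrow> real \<Rightarrow> 'a \<Rightarrow> nat \<Rightarrow> 'a \<Rightarrow> real" where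
  "walk_dist V E \<gamma> w 0 = (\<lambda>y. if y = w then 1 else 0)"
| "walk_dist V E \<gamma> w (Suc k) = (\<lambda>y. \<gamma> * walk_dist V E \<gamma> w k y +
      (\<Sum>x\<in>nbrs V E y. (1 - \<gamma>) / real (deg V E x) * walk_dist V E \<gamma> w k x))"

definition coupling :: "'a set \<Rightarrow> ('a \<Rightarrow> real) \<Rightarrow> ('a \<Rightarrow> real) \<Rightarrow> ('a \<Rightarrow> 'a \<Rightarrow> real) \<Rightarrow> bool" where
  "coupling V \<mu> \<nu> \<pi> \<longleftrightarrow> (\<forall>x\<in>V. \<forall>y\<in>V. \<pi> x y \<ge> 0) \<and>
     (\<forall>x\<in>V. (\<Sum>y\<in>V. \<pi> x y) = \<mu> x) \<and> (\<forall>y\<in>V. (\<Sum>x\<in>V. \<pi> x y) = \<nu> y)"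

definition wasserstein :: "'a set \<Rightarrow> ('a \<Rightarrow> 'a \<Rightarrow> bool) \<Rightarrow> ('a \<Rightarrow> real) \<Rightarrow> ('a \<Rightarrow> real) \<Rightarrow> real" where
  "wasserstein V E \<mu> \<nu> = Inf {(\<Sum>x\<in>V. \<Sum>y\<in>V. \<pi> x y * real (gdist E x y)) | \<pi>. coupling V \<mu> \<nu> \<pi>}"

definition W_seq :: "'a set \<Rightarrow> ('a \<Rightarrow> 'a \<Rightarrow> bool) \<Rightarrow> 'a \<Rightarrow> 'a \<Rightarrow> real \<Rightarrow> real \<Rightarrow> nat \<Rightarrow> real" where
  "W_seq V E u v \<alpha> \<beta> k = wasserstein V E (walk_dist V E \<alpha> u k) (walk_dist V E \<beta> v k)"

definition eventually_const :: "(nat \<Rightarrow> 'b) \<Rightarrow> bool" where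
  "eventually_const S \<longleftrightarrow> (\<exists>N. \<forall>k\<ge>N. S k = S N)"

end

(*
  Write P = \<gamma> I + (1 - \<gamma>) T for one step of the lazy walk acting on distributions, where
  (T f) y is the sum of f x / deg x over the neighbours x of y (the operator diffuse below).
  The walk is reversible with respect to the degree measure, so T is self-adjoint for the
  inner product \<langle>f, g\<rangle> = \<Sum> f g / deg.

  Since W_k \<rightarrow> 0, the sequence is eventually constant iff W_k = 0 for large k, i.e. iff
  \<mu>_k = \<nu>_k for large k.  Self-adjointness turns P^n f = 0 into P f = 0, so for \<alpha> = \<beta> this
  happens iff the laws already agree after one step, a local condition on u, v and \<alpha> that
  unfolds into cases (1)-(3).  If \<alpha> < \<beta>, the common law h = \<mu>_N is T-invariant, and
  \<delta>_u - h, \<delta>_v - h are eigenvectors of T for the distinct eigenvalues -\<alpha>/(1-\<alpha>) and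
  -\<beta>/(1-\<beta>); orthogonality of eigenspaces then forces h = 0, contradicting total mass 1.
*)
theory Submission
  imports Defs
begin

section \<open>The lazy walk operator\<close>

definition point_mass :: "'a \<Rightarrow> 'a \<Rightarrow> real" where
  "point_mass w = (\<lambda>y. if y = w then 1 else 0)"

definition diffuse :: "'a set \<Rightarrow> ('a \<Rightarrow> 'a \<Rightarrow> bool) \<Rightarrow> ('a \<Rightarrow> real) \<Rightarrow> 'a \<Rightarrow> real" where
  "diffuse V E f = (\<lambda>y. \<Sum>x\<in>nbrs V E y. f x / real (deg V E x))"

definition lazy_step :: "'a set \<Rightarrow> ('a \<Rightarrow> 'a \<Rightarrow> bool) \<Rightarrow> real \<Rightarrow> ('a \<Rightarrow> real) \<Rightarrow> 'a \<Rightarrow> real" where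
  "lazy_step V E \<gamma> f = (\<lambda>y. \<gamma> * f y + (1 - \<gamma>) * diffuse V E f y)"

definition deg_inner :: "'a set \<Rightarrow> ('a \<Rightarrow> 'a \<Rightarrow> bool) \<Rightarrow> ('a \<Rightarrow> real) \<Rightarrow> ('a \<Rightarrow> real) \<Rightarrow> real" where
  "deg_inner V E f g = (\<Sum>x\<in>V. f x * g x / real (deg V E x))"

lemma walk_dist_0: "walk_dist V E \<gamma> w 0 = point_mass w"
  by (simp add: point_mass_def)

lemma walk_dist_Suc: "walk_dist V E \<gamma> w (Suc k) = lazy_step V E \<gamma> (walk_dist V E \<gamma> w k)"
  by (auto simp: lazy_step_def diffuse_def sum_distrib_left intro!: sum.cong)

lemma walk_dist_add: "walk_dist V E \<gamma> w (n + k) = (lazy_step V E \<gamma> ^^ n) (walk_dist V E \<gamma> w k)"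
  by (induction n) (simp_all add: walk_dist_Suc del: walk_dist.simps)

lemma walk_dist_eq_funpow: "walk_dist V E \<gamma> w k = (lazy_step V E \<gamma> ^^ k) (point_mass w)"
  using walk_dist_add[of V E \<gamma> w k 0] by (simp add: walk_dist_0 del: walk_dist.simps)

lemma diffuse_diff: "diffuse V E (\<lambda>x. f x - g x) = (\<lambda>y. diffuse V E f y - diffuse V E g y)"
  by (simp add: diffuse_def diff_divide_distrib sum_subtractf)

lemma lazy_step_diff:
  "lazy_step V E \<gamma> (\<lambda>x. f x - g x) = (\<lambda>y. lazy_step V E \<gamma> f y - lazy_step V E \<gamma> g y)"
  by (simp add: lazy_step_def diffuse_diff algebra_simps)

lemma funpow_lazy_step_diff:
  "(lazy_step V E \<gamma> ^^ n) (\<lambda>x. f x - g x) = (\<lambda>y. (lazy_step V E \<gamma> ^^ n) f y - (lazy_step V E \<gamma> ^^ n) g y)"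
  by (induction n) (simp_all add: lazy_step_diff)

lemma diffuse_cong: "(\<And>x. x \<in> V \<Longrightarrow> f x = g x) \<Longrightarrow> diffuse V E f y = diffuse V E g y"
  unfolding diffuse_def nbrs_def by (intro sum.cong) auto

lemma lazy_step_cong:
  "(\<And>x. x \<in> V \<Longrightarrow> f x = g x) \<Longrightarrow> y \<in> V \<Longrightarrow> lazy_step V E \<gamma> f y = lazy_step V E \<gamma> g y"
  unfolding lazy_step_def using diffuse_cong[of V f g E y] by simp

lemma diffuse_nonneg: "(\<And>x. f x \<ge> 0) \<Longrightarrow> diffuse V E f y \<ge> 0"
  unfolding diffuse_def by (auto intro!: sum_nonneg)

lemma walk_dist_nonneg: "0 \<le> \<gamma> \<Longrightarrow> \<gamma> \<le> 1 \<Longrightarrow> walk_dist V E \<gamma> w k y \<ge> 0"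
proof (induction k arbitrary: y)
  case (Suc k)
  then show ?case unfolding walk_dist_Suc lazy_step_def
    by (intro add_nonneg_nonneg mult_nonneg_nonneg diffuse_nonneg) auto
qed simp

lemma walks_agree_if_first_steps_agree:
  assumes agree: "\<And>x. x \<in> V \<Longrightarrow> lazy_step V E \<gamma> (point_mass u) x = lazy_step V E \<gamma> (point_mass v) x"
    and "1 \<le> k" and "x \<in> V"
  shows "walk_dist V E \<gamma> u k x = walk_dist V E \<gamma> v k x"
  using assms(2,3)
proof (induction k arbitrary: x rule: dec_induct)
  case base
  then show ?case
    using agree unfolding One_nat_def walk_dist_Suc walk_dist_0 by blast
next
  case (step k)
  then show ?case
    unfolding walk_dist_Suc by (intro lazy_step_cong) auto
qed

lemma lazy_step_fixed_if_diffuse_fixed: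
  "diffuse V E h x = h x \<Longrightarrow> lazy_step V E \<gamma> h x = h x"
  by (simp add: lazy_step_def algebra_simps)

lemma eigen_if_lazy_step_eq_fixed_point:
  assumes "lazy_step V E \<gamma> f x = h x" and "diffuse V E h x = h x"
  shows "\<gamma> * (f x - h x) + (1 - \<gamma>) * diffuse V E (\<lambda>y. f y - h y) x = 0"
  using assms unfolding lazy_step_def diffuse_diff by (simp add: algebra_simps)

lemma funpow_lazy_step_fixed:
  assumes "\<And>x. x \<in> V \<Longrightarrow> lazy_step V E \<gamma> h x = h x" and "x \<in> V"
  shows "(lazy_step V E \<gamma> ^^ m) h x = h x"
  using assms(2)
proof (induction m arbitrary: x)
  case (Suc m)
  have "(lazy_step V E \<gamma> ^^ Suc m) h x = lazy_step V E \<gamma> h x"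
    unfolding funpow.simps o_apply using Suc by (intro lazy_step_cong) auto
  then show ?case using assms(1) Suc.prems by simp
qed simp

lemma diffuse_fixed_if_walks_agree:
  assumes agree: "\<And>k x. N \<le> k \<Longrightarrow> x \<in> V \<Longrightarrow> walk_dist V E \<alpha> u k x = walk_dist V E \<beta> v k x"
    and "\<alpha> \<noteq> \<beta>" and "x \<in> V"
  shows "diffuse V E (walk_dist V E \<alpha> u N) x = walk_dist V E \<alpha> u N x"
proof -
  let ?\<mu> = "walk_dist V E \<alpha> u N"
  have "lazy_step V E \<alpha> ?\<mu> x = lazy_step V E \<beta> (walk_dist V E \<beta> v N) x"
    using agree[of "Suc N" x] \<open>x \<in> V\<close> unfolding walk_dist_Suc by simp
  also have "\<dots> = lazy_step V E \<beta> ?\<mu> x"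
    using agree \<open>x \<in> V\<close> by (intro lazy_step_cong) auto
  finally have "(\<beta> - \<alpha>) * (?\<mu> x - diffuse V E ?\<mu> x) = 0"
    unfolding lazy_step_def by (simp add: algebra_simps)
  then show ?thesis using \<open>\<alpha> \<noteq> \<beta>\<close> by simp
qed

lemma deg_pos_if_connected:
  assumes "simple_graph V E" and "connected_graph V E" and "2 \<le> card V" and "x \<in> V"
  shows "0 < deg V E x"
proof -
  have "\<not> V \<subseteq> {x}"
  proof
    assume "V \<subseteq> {x}"
    then have "card V \<le> card {x}" by (intro card_mono) simp_all
    then show False using assms(3) by simp
  qed
  then obtain y where "y \<in> V" "y \<noteq> x" by blast
  then obtain n where path: "(x, y) \<in> edge_rel E ^^ n"
    using assms(2,4) unfolding connected_graph_def by blast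
  have "n \<noteq> 0" using path \<open>y \<noteq> x\<close> by (intro notI) simp
  then obtain n' where "n = Suc n'" using not0_implies_Suc by blast
  then obtain z where "(x, z) \<in> edge_rel E"
    using path relpow_Suc_D2[of x y n' "edge_rel E"] \<open>n = Suc n'\<close> by blast
  then have "E x z" by (simp add: edge_rel_def)
  then have "z \<in> nbrs V E x" using assms(1) by (simp add: nbrs_def simple_graph_def)
  moreover have "finite (nbrs V E x)" using assms(1) by (simp add: nbrs_def simple_graph_def)
  ultimately show ?thesis unfolding deg_def by (auto simp: card_gt_0_iff)
qed

section \<open>Self-adjointness for the degree inner product\<close>

locale nonisolated_graph =
  fixes V :: "'a set" and E :: "'a \<Rightarrow> 'a \<Rightarrow> bool"
  assumes simple: "simple_graph V E"
    and deg_pos: "x \<in> V \<Longrightarrow> deg V E x > 0"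
begin

lemma finite_V: "finite V"
  using simple by (simp add: simple_graph_def)

lemma adj_in_V: "E x y \<Longrightarrow> x \<in> V \<and> y \<in> V"
  using simple by (simp add: simple_graph_def)

lemma adj_sym: "E x y \<Longrightarrow> E y x"
  using simple by (simp add: simple_graph_def)

lemma adj_commute: "E x y \<longleftrightarrow> E y x"
  using adj_sym by blast

lemma adj_irrefl: "\<not> E x x"
  using simple by (simp add: simple_graph_def)

lemma finite_nbrs: "finite (nbrs V E y)"
  using finite_V by (simp add: nbrs_def)

lemma deg_inner_commute: "deg_inner V E f g = deg_inner V E g f"
  unfolding deg_inner_def by (simp add: mult.commute)

lemma deg_inner_add_left: "deg_inner V E (\<lambda>x. f x + g x) h = deg_inner V E f h + deg_inner V E g h"
  unfolding deg_inner_def by (simp add: sum.distrib[symmetric] algebra_simps add_divide_distrib)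

lemma deg_inner_add_right: "deg_inner V E h (\<lambda>x. f x + g x) = deg_inner V E h f + deg_inner V E h g"
  using deg_inner_add_left[of f g h] by (simp add: deg_inner_commute)

lemma deg_inner_scale_left: "deg_inner V E (\<lambda>x. c * f x) g = c * deg_inner V E f g"
  unfolding deg_inner_def by (simp add: sum_distrib_left algebra_simps)

lemma deg_inner_scale_right: "deg_inner V E f (\<lambda>x. c * g x) = c * deg_inner V E f g"
  using deg_inner_scale_left[of c g f] by (simp add: deg_inner_commute)

lemma deg_inner_zero_left [simp]: "deg_inner V E (\<lambda>_. 0) g = 0"
  by (simp add: deg_inner_def)

lemma deg_inner_zero_right [simp]: "deg_inner V E f (\<lambda>_. 0) = 0"
  by (simp add: deg_inner_def)

lemma deg_inner_cong:
  "(\<And>x. x \<in> V \<Longrightarrow> f x = f' x) \<Longrightarrow> (\<And>x. x \<in> V \<Longrightarrow> g x = g' x) \<Longrightarrow>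
    deg_inner V E f g = deg_inner V E f' g'"
  unfolding deg_inner_def by simp

lemma deg_inner_self_eq_0D:
  assumes "deg_inner V E f f = 0" and "x \<in> V"
  shows "f x = 0"
proof -
  have "\<forall>y\<in>V. f y * f y / real (deg V E y) = 0"
    using assms(1) finite_V unfolding deg_inner_def
    by (subst sum_nonneg_eq_0_iff[symmetric]) auto
  then show ?thesis using assms(2) deg_pos[OF assms(2)] by auto
qed

lemma diffuse_as_sum: "diffuse V E f y = (\<Sum>x\<in>V. if E y x then f x / real (deg V E x) else 0)"
  unfolding diffuse_def nbrs_def using finite_V by (simp add: sum.inter_filter)

lemma diffuse_self_adjoint: "deg_inner V E (diffuse V E f) g = deg_inner V E f (diffuse V E g)"
proof -
  have "deg_inner V E (diffuse V E f) g =
      (\<Sum>y\<in>V. \<Sum>x\<in>V. if E y x then f x * g y / (real (deg V E x) * real (deg V E y)) else 0)"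
    unfolding deg_inner_def diffuse_as_sum sum_distrib_right sum_divide_distrib
    by (intro sum.cong refl) auto
  also have "\<dots> = (\<Sum>x\<in>V. \<Sum>y\<in>V. if E y x then f x * g y / (real (deg V E x) * real (deg V E y)) else 0)"
    by (rule sum.swap)
  also have "\<dots> = deg_inner V E f (diffuse V E g)"
    unfolding deg_inner_def diffuse_as_sum sum_distrib_left sum_divide_distrib
    by (intro sum.cong refl) (auto simp: adj_commute)
  finally show ?thesis .
qed

lemma lazy_step_self_adjoint:
  "deg_inner V E (lazy_step V E \<gamma> f) g = deg_inner V E f (lazy_step V E \<gamma> g)"
  unfolding lazy_step_def
  by (simp add: deg_inner_add_left deg_inner_add_right deg_inner_scale_left deg_inner_scale_right
      diffuse_self_adjoint)

text \<open>By self-adjointness \<langle>P f, P f\<rangle> = \<langle>f, P (P f)\<rangle>, so P (P f) = 0 forces P f = 0.\<close>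

lemma lazy_step_eq_0_if_funpow_eq_0:
  assumes "\<And>x. x \<in> V \<Longrightarrow> (lazy_step V E \<gamma> ^^ Suc n) f x = 0" and "x \<in> V"
  shows "lazy_step V E \<gamma> f x = 0"
  using assms
proof (induction n arbitrary: f x)
  case (Suc n)
  let ?P = "lazy_step V E \<gamma>"
  have "?P (?P f) y = 0" if "y \<in> V" for y
    using Suc.IH[of "?P f"] Suc.prems(1) that by (simp only: funpow_Suc_right o_apply)
  then have "deg_inner V E (?P f) (?P f) = 0"
    unfolding lazy_step_self_adjoint by (simp add: deg_inner_def)
  then show ?case using deg_inner_self_eq_0D Suc.prems(2) by blast
qed simp

text \<open>Eigenvectors of T for distinct eigenvalues are orthogonal.  The eigenvalue
  equation is written projectively, a f + c T f = 0, so that c = 0 is allowed.\<close>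

lemma deg_inner_eq_0_if_eigen:
  assumes f: "\<And>x. x \<in> V \<Longrightarrow> a * f x + c * diffuse V E f x = 0"
    and g: "\<And>x. x \<in> V \<Longrightarrow> b * g x + d * diffuse V E g x = 0"
    and "a * d \<noteq> b * c"
  shows "deg_inner V E f g = 0"
proof -
  let ?t = "deg_inner V E (diffuse V E f) g"
  have "deg_inner V E (\<lambda>x. a * f x + c * diffuse V E f x) g = deg_inner V E (\<lambda>_. 0) g"
    by (rule deg_inner_cong) (use f in auto)
  then have tf: "c * ?t = - a * deg_inner V E f g"
    by (simp add: deg_inner_add_left deg_inner_scale_left)
  have "deg_inner V E f (\<lambda>x. b * g x + d * diffuse V E g x) = deg_inner V E f (\<lambda>_. 0)"
    by (rule deg_inner_cong) (use g in auto)
  then have tg: "d * ?t = - b * deg_inner V E f g"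
    by (simp add: deg_inner_add_right deg_inner_scale_right diffuse_self_adjoint)
  have "(a * d - b * c) * deg_inner V E f g = c * (d * ?t) - d * (c * ?t)"
    unfolding tf tg by (simp add: algebra_simps)
  then show ?thesis using assms(3) by simp
qed

lemma diffuse_deg: "x \<in> V \<Longrightarrow> diffuse V E (\<lambda>y. real (deg V E y)) x = real (deg V E x)"
proof -
  assume "x \<in> V"
  have "diffuse V E (\<lambda>y. real (deg V E y)) x = (\<Sum>t\<in>nbrs V E x. 1)"
    unfolding diffuse_def by (intro sum.cong) (auto simp: nbrs_def dest: deg_pos)
  then show ?thesis by (simp add: deg_def)
qed

lemma sum_diffuse: "(\<Sum>y\<in>V. diffuse V E f y) = (\<Sum>y\<in>V. f y)"
proof -
  have "(\<Sum>y\<in>V. diffuse V E f y) = deg_inner V E (diffuse V E f) (\<lambda>y. real (deg V E y))"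
    unfolding deg_inner_def using deg_pos by simp
  also have "\<dots> = deg_inner V E f (\<lambda>y. real (deg V E y))"
    unfolding diffuse_self_adjoint by (rule deg_inner_cong) (simp_all add: diffuse_deg)
  also have "\<dots> = (\<Sum>y\<in>V. f y)"
    unfolding deg_inner_def using deg_pos by simp
  finally show ?thesis .
qed

lemma sum_lazy_step: "(\<Sum>y\<in>V. lazy_step V E \<gamma> f y) = (\<Sum>y\<in>V. f y)"
proof -
  have "(\<Sum>y\<in>V. lazy_step V E \<gamma> f y) = \<gamma> * (\<Sum>y\<in>V. f y) + (1 - \<gamma>) * (\<Sum>y\<in>V. diffuse V E f y)"
    unfolding lazy_step_def by (simp add: sum.distrib sum_distrib_left)
  then show ?thesis by (simp add: sum_diffuse algebra_simps)
qed

lemma sum_walk_dist: "w \<in> V \<Longrightarrow> (\<Sum>y\<in>V. walk_dist V E \<gamma> w k y) = 1"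
  by (induction k) (simp_all add: finite_V walk_dist_0 point_mass_def walk_dist_Suc sum_lazy_step
      del: walk_dist.simps)

lemma diffuse_point_mass:
  "u \<in> V \<Longrightarrow> diffuse V E (point_mass u) y = (if E y u then 1 / real (deg V E u) else 0)"
proof -
  assume "u \<in> V"
  have "diffuse V E (point_mass u) y = (\<Sum>x\<in>nbrs V E y. if x = u then 1 / real (deg V E u) else 0)"
    unfolding diffuse_def point_mass_def by (intro sum.cong) auto
  also have "\<dots> = (if E y u then 1 / real (deg V E u) else 0)"
    using \<open>u \<in> V\<close> finite_nbrs by (simp add: nbrs_def)
  finally show ?thesis .
qed

lemma lazy_step_point_mass:
  "u \<in> V \<Longrightarrow> lazy_step V E \<alpha> (point_mass u) y =
    \<alpha> * (if y = u then 1 else 0) + (1 - \<alpha>) * (if E y u then 1 / real (deg V E u) else 0)"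
  by (simp add: lazy_step_def diffuse_point_mass) (simp add: point_mass_def)

lemma point_mass_steps_eq_imp:
  assumes u: "u \<in> V" and v: "v \<in> V" and "u \<noteq> v"
    and agree: "\<And>x. x \<in> V \<Longrightarrow> lazy_step V E \<alpha> (point_mass u) x = lazy_step V E \<alpha> (point_mass v) x"
  shows "(\<alpha> = 0 \<and> nbrs V E u = nbrs V E v) \<or>
    (\<alpha> = 1 / (real (deg V E u) + 1) \<and> E u v \<and> nbrs V E u - {v} = nbrs V E v - {u})"
proof -
  have du: "deg V E u > 0" and dv: "deg V E v > 0" using deg_pos u v by auto
  have at_u: "\<alpha> = (1 - \<alpha>) * (if E u v then 1 / real (deg V E v) else 0)"
    using agree[OF u] \<open>u \<noteq> v\<close> u v by (simp add: lazy_step_point_mass adj_irrefl)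
  have at_v: "\<alpha> = (1 - \<alpha>) * (if E u v then 1 / real (deg V E u) else 0)"
    using agree[OF v] \<open>u \<noteq> v\<close> u v by (simp add: lazy_step_point_mass adj_irrefl adj_commute[of v u])
  have "\<alpha> \<noteq> 1" using at_u by auto
  have off: "E y u \<longleftrightarrow> E y v" if "y \<in> V" "y \<noteq> u" "y \<noteq> v" for y
  proof -
    have "(1 - \<alpha>) * (if E y u then 1 / real (deg V E u) else 0) =
        (1 - \<alpha>) * (if E y v then 1 / real (deg V E v) else 0)"
      using agree[OF that(1)] that u v by (simp add: lazy_step_point_mass)
    then show ?thesis using \<open>\<alpha> \<noteq> 1\<close> du dv by (auto split: if_splits)
  qed
  show ?thesis
  proof (cases "E u v")
    case False
    then have "nbrs V E u = nbrs V E v"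
      using off adj_irrefl adj_sym by (auto simp: nbrs_def)
    then show ?thesis using at_u False by simp
  next
    case True
    then have "(1 - \<alpha>) / real (deg V E u) = (1 - \<alpha>) / real (deg V E v)"
      using at_u at_v by simp
    then have "deg V E u = deg V E v" using \<open>\<alpha> \<noteq> 1\<close> by simp
    then have "\<alpha> = 1 / (real (deg V E u) + 1)" using at_u True du by (simp add: field_simps)
    moreover have "nbrs V E u - {v} = nbrs V E v - {u}"
      using off adj_irrefl adj_sym by (auto simp: nbrs_def)
    ultimately show ?thesis using True by simp
  qed
qed

lemma point_mass_steps_eq_if:
  assumes u: "u \<in> V" and v: "v \<in> V" and "x \<in> V"
    and "(\<alpha> = 0 \<and> nbrs V E u = nbrs V E v) \<or>
      (\<alpha> = 1 / (real (deg V E u) + 1) \<and> E u v \<and> nbrs V E u - {v} = nbrs V E v - {u})"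
  shows "lazy_step V E \<alpha> (point_mass u) x = lazy_step V E \<alpha> (point_mass v) x"
  using assms(4)
proof
  assume c: "\<alpha> = 0 \<and> nbrs V E u = nbrs V E v"
  then have "E x u \<longleftrightarrow> E x v" "deg V E u = deg V E v"
    using \<open>x \<in> V\<close> by (auto simp: nbrs_def deg_def adj_commute[of x])
  then show ?thesis using c u v by (simp add: lazy_step_point_mass)
next
  assume c: "\<alpha> = 1 / (real (deg V E u) + 1) \<and> E u v \<and> nbrs V E u - {v} = nbrs V E v - {u}"
  have "v \<in> nbrs V E u" "u \<in> nbrs V E v" using c adj_in_V adj_sym by (auto simp: nbrs_def)
  then have "deg V E u - 1 = deg V E v - 1"
    using c card_Diff_singleton[of v "nbrs V E u"] card_Diff_singleton[of u "nbrs V E v"]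
    by (simp add: deg_def)
  then have deg_eq: "deg V E u = deg V E v" using deg_pos[OF u] deg_pos[OF v] by arith
  have step: "(1 - \<alpha>) / real (deg V E u) = \<alpha>"
    using c deg_pos[OF u] by (simp add: field_simps)
  show ?thesis
  proof (cases "x = u \<or> x = v")
    case True
    have "u \<noteq> v" "E u v" "E v u" using c adj_irrefl adj_sym by blast+
    with True show ?thesis
      using u v step deg_eq by (elim disjE) (simp_all add: lazy_step_point_mass adj_irrefl)
  next
    case False
    then have "E x u \<longleftrightarrow> E x v"
      using c \<open>x \<in> V\<close> by (auto simp: nbrs_def adj_commute[of x])
    then show ?thesis using False u v deg_eq by (simp add: lazy_step_point_mass)
  qed
qed

lemma point_mass_steps_eq_iff:
  assumes "u \<in> V" and "v \<in> V"
  shows "(\<forall>x\<in>V. lazy_step V E \<alpha> (point_mass u) x = lazy_step V E \<alpha> (point_mass v) x) \<longleftrightarrow>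
    (\<alpha> = 0 \<and> nbrs V E u = nbrs V E v) \<or>
    (\<alpha> = 1 / (real (deg V E u) + 1) \<and> E u v \<and> nbrs V E u - {v} = nbrs V E v - {u}) \<or> u = v"
  using point_mass_steps_eq_imp[OF assms] point_mass_steps_eq_if[OF assms] by blast

lemma lazy_step_eq_fixed_point_if_funpow_eq:
  assumes iter: "\<And>x. x \<in> V \<Longrightarrow> (lazy_step V E \<gamma> ^^ Suc n) f x = h x"
    and fixed: "\<And>x. x \<in> V \<Longrightarrow> lazy_step V E \<gamma> h x = h x" and "x \<in> V"
  shows "lazy_step V E \<gamma> f x = h x"
proof -
  have "(lazy_step V E \<gamma> ^^ Suc n) (\<lambda>y. f y - h y) y = 0" if "y \<in> V" for y
    unfolding funpow_lazy_step_diff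
    using iter[OF that] funpow_lazy_step_fixed[OF fixed that, of "Suc n"] by linarith
  then have "lazy_step V E \<gamma> (\<lambda>y. f y - h y) x = 0"
    using lazy_step_eq_0_if_funpow_eq_0 \<open>x \<in> V\<close> by blast
  then show ?thesis using fixed[OF \<open>x \<in> V\<close>] by (simp add: lazy_step_diff)
qed

text \<open>For u \<noteq> v, the functions \<delta>_u - h, \<delta>_v - h and h lie in eigenspaces of T
  for three distinct eigenvalues; expanding \<langle>\<delta>_u, \<delta>_v\<rangle> = 0 leaves \<langle>h, h\<rangle> = 0.\<close>

lemma common_fixed_point_of_first_steps_eq_0:
  assumes u: "u \<in> V" and v: "v \<in> V" and "\<alpha> \<noteq> \<beta>"
    and fixed: "\<And>x. x \<in> V \<Longrightarrow> diffuse V E h x = h x"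
    and hu: "\<And>x. x \<in> V \<Longrightarrow> lazy_step V E \<alpha> (point_mass u) x = h x"
    and hv: "\<And>x. x \<in> V \<Longrightarrow> lazy_step V E \<beta> (point_mass v) x = h x"
    and "x \<in> V"
  shows "h x = 0"
proof (cases "u = v")
  case True
  then have "\<alpha> = \<beta>"
    using hu[OF u] hv[OF u] u by (simp add: lazy_step_point_mass adj_irrefl)
  then show ?thesis using \<open>\<alpha> \<noteq> \<beta>\<close> by simp
next
  case False
  define f where "f = (\<lambda>y. point_mass u y - h y)"
  define g where "g = (\<lambda>y. point_mass v y - h y)"
  have f_eigen: "\<alpha> * f y + (1 - \<alpha>) * diffuse V E f y = 0" if "y \<in> V" for y
    unfolding f_def using hu[OF that] fixed[OF that] by (rule eigen_if_lazy_step_eq_fixed_point)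
  have g_eigen: "\<beta> * g y + (1 - \<beta>) * diffuse V E g y = 0" if "y \<in> V" for y
    unfolding g_def using hv[OF that] fixed[OF that] by (rule eigen_if_lazy_step_eq_fixed_point)
  have h_eigen: "1 * h y + (- 1) * diffuse V E h y = 0" if "y \<in> V" for y
    using fixed[OF that] by simp
  have "deg_inner V E f g = 0"
    by (rule deg_inner_eq_0_if_eigen[OF f_eigen g_eigen]) (use \<open>\<alpha> \<noteq> \<beta>\<close> in \<open>auto simp: algebra_simps\<close>)
  moreover have "deg_inner V E h f = 0"
    by (rule deg_inner_eq_0_if_eigen[OF h_eigen f_eigen]) (auto simp: algebra_simps)
  moreover have "deg_inner V E h g = 0"
    by (rule deg_inner_eq_0_if_eigen[OF h_eigen g_eigen]) (auto simp: algebra_simps)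
  moreover have "deg_inner V E (point_mass u) (point_mass v) = 0"
    using False unfolding deg_inner_def point_mass_def by (intro sum.neutral) auto
  moreover have "deg_inner V E (point_mass u) (point_mass v) =
      deg_inner V E (\<lambda>y. h y + f y) (\<lambda>y. h y + g y)"
    by (rule deg_inner_cong) (simp_all add: f_def g_def)
  ultimately have "deg_inner V E h h = 0"
    by (simp add: deg_inner_add_left deg_inner_add_right deg_inner_commute[of f h])
  then show ?thesis using deg_inner_self_eq_0D \<open>x \<in> V\<close> by blast
qed

lemma laziness_eq_if_walks_eventually_agree:
  assumes u: "u \<in> V" and v: "v \<in> V"
    and agree: "\<And>k x. N \<le> k \<Longrightarrow> x \<in> V \<Longrightarrow> walk_dist V E \<alpha> u k x = walk_dist V E \<beta> v k x"
  shows "\<alpha> = \<beta>"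
proof (rule ccontr)
  assume "\<alpha> \<noteq> \<beta>"
  let ?h = "walk_dist V E \<alpha> u (Suc N)"
  have fixed: "diffuse V E ?h x = ?h x" if "x \<in> V" for x
    using agree \<open>\<alpha> \<noteq> \<beta>\<close> that by (intro diffuse_fixed_if_walks_agree) auto
  then have lazy_fixed: "lazy_step V E \<gamma> ?h x = ?h x" if "x \<in> V" for \<gamma> x
    using that by (intro lazy_step_fixed_if_diffuse_fixed) auto
  have hu: "lazy_step V E \<alpha> (point_mass u) x = ?h x" if "x \<in> V" for x
    by (rule lazy_step_eq_fixed_point_if_funpow_eq[where n = N, OF _ lazy_fixed that])
      (simp only: walk_dist_eq_funpow)
  have hv: "lazy_step V E \<beta> (point_mass v) x = ?h x" if "x \<in> V" for x
  proof (rule lazy_step_eq_fixed_point_if_funpow_eq[where n = N, OF _ lazy_fixed that])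
    fix y assume "y \<in> V"
    then have "?h y = walk_dist V E \<beta> v (Suc N) y" by (intro agree) simp_all
    then show "(lazy_step V E \<beta> ^^ Suc N) (point_mass v) y = ?h y"
      by (simp only: walk_dist_eq_funpow)
  qed
  have "(\<Sum>x\<in>V. ?h x) = 0"
    using common_fixed_point_of_first_steps_eq_0[OF u v \<open>\<alpha> \<noteq> \<beta>\<close> fixed hu hv]
    by (intro sum.neutral) blast
  then show False using sum_walk_dist[OF u, of \<alpha> "Suc N"] by linarith
qed

lemma walks_eventually_agree_iff:
  assumes u: "u \<in> V" and v: "v \<in> V"
  shows "(\<exists>N. \<forall>k\<ge>N. \<forall>x\<in>V. walk_dist V E \<alpha> u k x = walk_dist V E \<beta> v k x) \<longleftrightarrow>
    \<alpha> = \<beta> \<and> (\<forall>x\<in>V. lazy_step V E \<alpha> (point_mass u) x = lazy_step V E \<alpha> (point_mass v) x)"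
proof
  assume "\<exists>N. \<forall>k\<ge>N. \<forall>x\<in>V. walk_dist V E \<alpha> u k x = walk_dist V E \<beta> v k x"
  then obtain N where agree: "\<And>k x. N \<le> k \<Longrightarrow> x \<in> V \<Longrightarrow> walk_dist V E \<alpha> u k x = walk_dist V E \<beta> v k x"
    by blast
  have "\<alpha> = \<beta>" using u v agree by (rule laziness_eq_if_walks_eventually_agree)
  moreover have "lazy_step V E \<alpha> (\<lambda>y. point_mass u y - point_mass v y) x = 0" if "x \<in> V" for x
  proof (rule lazy_step_eq_0_if_funpow_eq_0[OF _ that])
    fix y assume "y \<in> V"
    then have "walk_dist V E \<alpha> u (Suc N) y = walk_dist V E \<beta> v (Suc N) y" by (intro agree) simp_all
    then show "(lazy_step V E \<alpha> ^^ Suc N) (\<lambda>y. point_mass u y - point_mass v y) y = 0"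
      unfolding funpow_lazy_step_diff walk_dist_eq_funpow \<open>\<alpha> = \<beta>\<close> by linarith
  qed
  ultimately show "\<alpha> = \<beta> \<and> (\<forall>x\<in>V. lazy_step V E \<alpha> (point_mass u) x = lazy_step V E \<alpha> (point_mass v) x)"
    unfolding lazy_step_diff by simp
next
  assume "\<alpha> = \<beta> \<and> (\<forall>x\<in>V. lazy_step V E \<alpha> (point_mass u) x = lazy_step V E \<alpha> (point_mass v) x)"
  then have "\<forall>k\<ge>1. \<forall>x\<in>V. walk_dist V E \<alpha> u k x = walk_dist V E \<beta> v k x"
    using walks_agree_if_first_steps_agree[of V E \<alpha> u v] by auto
  then show "\<exists>N. \<forall>k\<ge>N. \<forall>x\<in>V. walk_dist V E \<alpha> u k x = walk_dist V E \<beta> v k x" ..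
qed

end

section \<open>Vanishing Wasserstein distance\<close>

lemma gdist_self: "gdist E x x = 0"
  unfolding gdist_def by (rule Least_eq_0) simp

lemma gdist_ge_1:
  assumes "connected_graph V E" and "x \<in> V" and "y \<in> V" and "x \<noteq> y"
  shows "1 \<le> gdist E x y"
proof -
  obtain n where "(x, y) \<in> edge_rel E ^^ n"
    using assms(1-3) unfolding connected_graph_def by blast
  then have "(x, y) \<in> edge_rel E ^^ gdist E x y"
    unfolding gdist_def by (rule LeastI)
  then show ?thesis using \<open>x \<noteq> y\<close> by (cases "gdist E x y") auto
qed

lemma wasserstein_eq_0_if_eq:
  assumes "finite V" and "\<And>x. x \<in> V \<Longrightarrow> 0 \<le> m x" and "\<And>x. x \<in> V \<Longrightarrow> m x = n x"
  shows "wasserstein V E m n = 0"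
  unfolding wasserstein_def
proof (rule cInf_eq_minimum)
  define \<pi> where "\<pi> = (\<lambda>x y. if x = y then m x else 0)"
  have "coupling V m n \<pi>"
    using assms unfolding coupling_def \<pi>_def by (simp add: sum.delta sum.delta')
  moreover have "(\<Sum>x\<in>V. \<Sum>y\<in>V. \<pi> x y * real (gdist E x y)) = 0"
    unfolding \<pi>_def by (intro sum.neutral ballI) (simp add: gdist_self)
  ultimately show "0 \<in> {\<Sum>x\<in>V. \<Sum>y\<in>V. \<pi> x y * real (gdist E x y) |\<pi>. coupling V m n \<pi>}"
    by force
next
  fix z assume "z \<in> {\<Sum>x\<in>V. \<Sum>y\<in>V. \<pi> x y * real (gdist E x y) |\<pi>. coupling V m n \<pi>}"
  then show "0 \<le> z" by (auto simp: coupling_def intro!: sum_nonneg)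
qed

lemma off_diagonal_mass_le_cost:
  assumes "finite V" and "connected_graph V E" and \<pi>: "coupling V m n \<pi>" and "x \<in> V"
  shows "(\<Sum>y\<in>V - {x}. \<pi> x y) \<le> (\<Sum>a\<in>V. \<Sum>b\<in>V. \<pi> a b * real (gdist E a b))"
    and "(\<Sum>y\<in>V - {x}. \<pi> y x) \<le> (\<Sum>a\<in>V. \<Sum>b\<in>V. \<pi> a b * real (gdist E a b))"
proof -
  have nonneg: "0 \<le> \<pi> a b * real (gdist E a b)" if "a \<in> V" "b \<in> V" for a b
    using \<pi> that by (simp add: coupling_def)
  have le: "\<pi> a b \<le> \<pi> a b * real (gdist E a b)" if "a \<in> V" "b \<in> V" "a \<noteq> b" for a b
  proof -
    have "0 \<le> \<pi> a b" using \<pi> that by (simp add: coupling_def)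
    moreover have "1 \<le> real (gdist E a b)" using gdist_ge_1[OF assms(2) that] by simp
    ultimately show ?thesis using mult_left_mono[of 1 "real (gdist E a b)" "\<pi> a b"] by simp
  qed
  have "(\<Sum>y\<in>V - {x}. \<pi> x y) \<le> (\<Sum>y\<in>V - {x}. \<pi> x y * real (gdist E x y))"
    using le \<open>x \<in> V\<close> by (intro sum_mono) auto
  also have "\<dots> \<le> (\<Sum>b\<in>V. \<pi> x b * real (gdist E x b))"
    using nonneg \<open>x \<in> V\<close> assms(1) by (intro sum_mono2) auto
  also have "\<dots> \<le> (\<Sum>a\<in>V. \<Sum>b\<in>V. \<pi> a b * real (gdist E a b))"
    using nonneg \<open>x \<in> V\<close> assms(1) by (intro member_le_sum sum_nonneg) auto
  finally show "(\<Sum>y\<in>V - {x}. \<pi> x y) \<le> (\<Sum>a\<in>V. \<Sum>b\<in>V. \<pi> a b * real (gdist E a b))" .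
  have "(\<Sum>y\<in>V - {x}. \<pi> y x) \<le> (\<Sum>y\<in>V - {x}. \<pi> y x * real (gdist E y x))"
    using le \<open>x \<in> V\<close> by (intro sum_mono) auto
  also have "\<dots> \<le> (\<Sum>a\<in>V. \<pi> a x * real (gdist E a x))"
    using nonneg \<open>x \<in> V\<close> assms(1) by (intro sum_mono2) auto
  also have "\<dots> \<le> (\<Sum>a\<in>V. \<Sum>b\<in>V. \<pi> a b * real (gdist E a b))"
    using nonneg \<open>x \<in> V\<close> assms(1) by (intro sum_mono member_le_sum) auto
  finally show "(\<Sum>y\<in>V - {x}. \<pi> y x) \<le> (\<Sum>a\<in>V. \<Sum>b\<in>V. \<pi> a b * real (gdist E a b))" .
qed

lemma abs_diff_le_wasserstein:
  assumes "finite V" and "connected_graph V E"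
    and "\<And>x. x \<in> V \<Longrightarrow> 0 \<le> m x" and "\<And>x. x \<in> V \<Longrightarrow> 0 \<le> n x"
    and "(\<Sum>x\<in>V. m x) = 1" and "(\<Sum>x\<in>V. n x) = 1" and "x \<in> V"
  shows "\<bar>m x - n x\<bar> \<le> wasserstein V E m n"
  unfolding wasserstein_def
proof (rule cInf_greatest)
  have "coupling V m n (\<lambda>a b. m a * n b)"
    using assms(3-6) unfolding coupling_def
    by (simp add: sum_distrib_left[symmetric] sum_distrib_right[symmetric])
  then show "{\<Sum>a\<in>V. \<Sum>b\<in>V. \<pi> a b * real (gdist E a b) |\<pi>. coupling V m n \<pi>} \<noteq> {}"
    by blast
next
  fix z assume "z \<in> {\<Sum>a\<in>V. \<Sum>b\<in>V. \<pi> a b * real (gdist E a b) |\<pi>. coupling V m n \<pi>}"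
  then obtain \<pi> where \<pi>: "coupling V m n \<pi>" and z: "z = (\<Sum>a\<in>V. \<Sum>b\<in>V. \<pi> a b * real (gdist E a b))"
    by blast
  have "m x = \<pi> x x + (\<Sum>y\<in>V - {x}. \<pi> x y)" "n x = \<pi> x x + (\<Sum>y\<in>V - {x}. \<pi> y x)"
    using \<pi> \<open>x \<in> V\<close> assms(1) by (simp_all add: coupling_def sum.remove)
  moreover have "0 \<le> (\<Sum>y\<in>V - {x}. \<pi> x y)" "0 \<le> (\<Sum>y\<in>V - {x}. \<pi> y x)"
    using \<pi> \<open>x \<in> V\<close> by (auto simp: coupling_def intro!: sum_nonneg)
  ultimately show "\<bar>m x - n x\<bar> \<le> z"
    using off_diagonal_mass_le_cost[OF assms(1,2) \<pi> \<open>x \<in> V\<close>] unfolding z by linarith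
qed

lemma wasserstein_eq_0_iff:
  assumes "finite V" and "connected_graph V E"
    and "\<And>x. x \<in> V \<Longrightarrow> 0 \<le> m x" and "\<And>x. x \<in> V \<Longrightarrow> 0 \<le> n x"
    and "(\<Sum>x\<in>V. m x) = 1" and "(\<Sum>x\<in>V. n x) = 1"
  shows "wasserstein V E m n = 0 \<longleftrightarrow> (\<forall>x\<in>V. m x = n x)"
proof
  assume "wasserstein V E m n = 0"
  then show "\<forall>x\<in>V. m x = n x"
    using abs_diff_le_wasserstein[OF assms] by force
next
  assume "\<forall>x\<in>V. m x = n x"
  then show "wasserstein V E m n = 0"
    using wasserstein_eq_0_if_eq[of V m n E] assms(1,3) by blast
qed

lemma eventually_const_iff_eventually_eq_limit:
  fixes S :: "nat \<Rightarrow> 'b :: t2_space"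
  assumes "S \<longlonglongrightarrow> c"
  shows "eventually_const S \<longleftrightarrow> (\<exists>N. \<forall>k\<ge>N. S k = c)"
proof
  assume "eventually_const S"
  then obtain N where N: "\<forall>k\<ge>N. S k = S N"
    unfolding eventually_const_def by blast
  then have "eventually (\<lambda>k. S k = S N) sequentially"
    unfolding eventually_sequentially by blast
  then have "S \<longlonglongrightarrow> S N" by (rule tendsto_eventually)
  then have "S N = c" using assms by (rule LIMSEQ_unique)
  have "\<forall>k\<ge>N. S k = c"
  proof (intro allI impI)
    fix k assume "N \<le> k"
    then have "S k = S N" using N by blast
    then show "S k = c" using \<open>S N = c\<close> by (rule trans)
  qed
  then show "\<exists>N. \<forall>k\<ge>N. S k = c" ..
next
  assume "\<exists>N. \<forall>k\<ge>N. S k = c"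
  then obtain N where "\<forall>k\<ge>N. S k = c" ..
  then show "eventually_const S"
    unfolding eventually_const_def by (intro exI[of _ N]) simp
qed

theorem theorem6p6:
  fixes V :: "'a set" and E :: "'a \<Rightarrow> 'a \<Rightarrow> bool" and u v :: 'a and \<alpha> \<beta> :: real
  assumes "simple_graph V E" and "connected_graph V E" and "card V \<ge> 2"
    and "u \<in> V" and "v \<in> V"
    and "0 \<le> \<alpha>" and "\<alpha> \<le> \<beta>" and "\<beta> \<le> 1"
    and "W_seq V E u v \<alpha> \<beta> \<longlonglongrightarrow> 0"
  shows "eventually_const (W_seq V E u v \<alpha> \<beta>) \<longleftrightarrow>
    ((\<alpha> = 0 \<and> \<beta> = 0 \<and> nbrs V E u = nbrs V E v)
     \<or> (\<alpha> = 1 / (real (deg V E u) + 1) \<and> \<beta> = \<alpha> \<and> E u v \<and>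
        nbrs V E u - {v} = nbrs V E v - {u})
     \<or> (\<alpha> = \<beta> \<and> u = v))"
proof -
  interpret nonisolated_graph V E
    using assms(1-3) deg_pos_if_connected by unfold_locales auto
  have W_eq_0_iff: "W_seq V E u v \<alpha> \<beta> k = 0 \<longleftrightarrow>
      (\<forall>x\<in>V. walk_dist V E \<alpha> u k x = walk_dist V E \<beta> v k x)" for k
    unfolding W_seq_def
  proof (rule wasserstein_eq_0_iff[OF finite_V assms(2)])
    show "0 \<le> walk_dist V E \<alpha> u k x" "0 \<le> walk_dist V E \<beta> v k x" for x
      using assms(6-8) by (simp_all add: walk_dist_nonneg)
    show "(\<Sum>x\<in>V. walk_dist V E \<alpha> u k x) = 1" "(\<Sum>x\<in>V. walk_dist V E \<beta> v k x) = 1"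
      using assms(4,5) by (simp_all add: sum_walk_dist del: walk_dist.simps)
  qed
  have "eventually_const (W_seq V E u v \<alpha> \<beta>) \<longleftrightarrow> (\<exists>N. \<forall>k\<ge>N. W_seq V E u v \<alpha> \<beta> k = 0)"
    using assms(9) by (rule eventually_const_iff_eventually_eq_limit)
  also have "\<dots> \<longleftrightarrow> (\<exists>N. \<forall>k\<ge>N. \<forall>x\<in>V. walk_dist V E \<alpha> u k x = walk_dist V E \<beta> v k x)"
    by (simp only: W_eq_0_iff)
  also have "\<dots> \<longleftrightarrow> \<alpha> = \<beta> \<and>
      (\<forall>x\<in>V. lazy_step V E \<alpha> (point_mass u) x = lazy_step V E \<alpha> (point_mass v) x)"
    using assms(4,5) by (rule walks_eventually_agree_iff)
  finally show ?thesis
    unfolding point_mass_steps_eq_iff[OF assms(4,5)] by auto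
qed

end
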